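(* Let $\mathit{Lin}_n,\mathit{Lout}_n,\mathit{Ain}_n,\mathit{Aout}_n$ be the solution of the data flow equations for a procedure $p$ computed by iteration starting from $\emptyset$ for every variable. Let $n$ be a node, $x\in\mathbf{P}$ and $z\in\mathbf{V}\setminus\{?\}$. If, along some execution path from $\mathrm{Start}_p$ reaching node $n$ (executing the pointer assignment statements with their usual meaning, pointers being undefined, i.e. holding $?$, at $\mathrm{Start}_p$), $x$ holds the address of $z$ on entry to $n$, then $x\in\mathit{Ref}_n$ implies $(x,z)\in\mathit{Ain}_n$.
   Context: $\mathbf{V}$ is a finite set of variables, $\mathbf{P}\subseteq\mathbf{V}$ the set of pointer variables, and $\mathbf{V}\setminus\mathbf{P}$ contains a special element $?$ (undefined location). A procedure $p$ is a control flow graph whose nodes are statements, with unique entry node $\mathrm{Start}_p$ (no predecessors) and unique exit node $\mathrm{End}_p$ (no successors), every node reachable from $\mathrm{Start}_p$ and $\mathrm{End}_p$ reachable from every node; $\mathit{succ}(n)$, $\mathit{pred}(n)$ denote successors/predecessors. Every node is of one of the forms: "use $x$", "$x=\&a$", "$x=y$", "$x=*y$", "$*x=y$", or "other", where $x,y\in\mathbf{P}$, $a\in\mathbf{V}$. Relation notation for $R\subseteq\mathbf{P}\times\mathbf{V}$ and a set $X$: $R\,X=\{v\mid u\in X,\ (u,v)\in R\}$; $R|_X=\{(u,v)\in R\mid u\in X\}$; $R^2=\{(u,w)\mid (u,v)\in R,\ (v,w)\in R\}$. $\mathit{Must}(R)=\bigcup_{x\in\mathbf{P}}\{x\}\times M_x$,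 where $M_x=\mathbf{V}$ if $R|_{\{x\}}=\emptyset$ or $R|_{\{x\}}=\{(x,?)\}$; $M_x=\{y\}$ if $R|_{\{x\}}=\{(x,y)\}$ with $y\neq ?$; and $M_x=\emptyset$ otherwise. Extractor functions of node $n$ (with $A=\mathit{Ain}_n$): - use $x$: $\mathit{Def}_n=\emptyset$, $\mathit{Kill}_n=\emptyset$, $\mathit{Ref}_n=\{x\}$, $\mathit{Pointee}_n=\emptyset$. - $x=\&a$: $\mathit{Def}_n=\{x\}$, $\mathit{Kill}_n=\{x\}$, $\mathit{Ref}_n=\emptyset$, $\mathit{Pointee}_n=\{a\}$. - $x=y$: $\mathit{Def}_n=\{x\}$, $\mathit{Kill}_n=\{x\}$, $\mathit{Ref}_n=\{y\}$ if $\mathit{Def}_n\cap\mathit{Lout}_n\neq\emptyset$ and $\emptyset$ otherwise, $\mathit{Pointee}_n=A\{y\}$. - $x=*y$: $\mathit{Def}_n=\{x\}$, $\mathit{Kill}_n=\{x\}$, $\mathit{Ref}_n=\{y\}\cup((A\{y\})\cap\mathbf{P})$ if $\mathit{Def}_n\cap\mathit{Lout}_n\neq\emptyset$ and $\emptyset$ otherwise, $\mathit{Pointee}_n=A^2\{y\}$. - $*x=y$: $\mathit{Def}_n=(A\{x\})\cap\mathbf{P}$, $\mathit{Kill}_n=(\mathit{Must}(A)\{x\})\cap\mathbf{P}$, $\mathit{Ref}_n=\{x,y\}$ if $\mathit{Def}_n\cap\mathit{Lout}_n\neq\emptyset$ and $\{x\}$ otherwise, $\mathit{Pointee}_n=A\{y\}$.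 - other: all four are $\emptyset$. Data flow equations: $\mathit{Lout}_n=\emptyset$ if $n=\mathrm{End}_p$, else $\bigcup_{s\in\mathit{succ}(n)}\mathit{Lin}_s$; $\mathit{Lin}_n=(\mathit{Lout}_n-\mathit{Kill}_n)\cup\mathit{Ref}_n$; $\mathit{Ain}_n=\mathit{Lin}_n\times\{?\}$ if $n=\mathrm{Start}_p$, else $\big(\bigcup_{m\in\mathit{pred}(n)}\mathit{Aout}_m\big)|_{\mathit{Lin}_n}$; $\mathit{Aout}_n=\big((\mathit{Ain}_n-(\mathit{Kill}_n\times\mathbf{V}))\cup(\mathit{Def}_n\times\mathit{Pointee}_n)\big)|_{\mathit{Lout}_n}$. The solution is the greatest fixed point with respect to the data-flow order in which $\sqsubseteq$ is $\supseteq$ (top element $\emptyset$). *)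

theory Defs
  imports Main "HOL-Library.Product_Order"
begin

text \<open>Statements of the procedure. Variables range over the finite type 'v (the set V);
  P is the set of pointer variables and und is the special undefined location ?.\<close>

datatype 'v stmt =
    Use 'v
  | AddrOf 'v 'v      (* x = &a *)
  | Copy 'v 'v        (* x = y *)
  | Load 'v 'v        (* x = *y *)
  | Store 'v 'v       (* *x = y *)
  | Other

fun wf_stmt :: "'v set \<Rightarrow> 'v stmt \<Rightarrow> bool" where
  "wf_stmt P (Use x) = (x \<in> P)"
| "wf_stmt P (AddrOf x a) = (x \<in> P)"
| "wf_stmt P (Copy x y) = (x \<in> P \<and> y \<in> P)"
| "wf_stmt P (Load x y) = (x \<in> P \<and> y \<in> P)"
| "wf_stmt P (Store x y) = (x \<in> P \<and> y \<in> P)"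
| "wf_stmt P Other = True"

text \<open>Restriction R|_X. Image R X is the library's R `` X; R^2 is R O R.\<close>
definition restr :: "('a \<times> 'b) set \<Rightarrow> 'a set \<Rightarrow> ('a \<times> 'b) set" where
  "restr R X = {(u, v) \<in> R. u \<in> X}"

definition Mset :: "'v \<Rightarrow> ('v \<times> 'v) set \<Rightarrow> 'v \<Rightarrow> 'v set" where
  "Mset und R x =
     (if restr R {x} = {} \<or> restr R {x} = {(x, und)} then UNIV
      else if (\<exists>y. y \<noteq> und \<and> restr R {x} = {(x, y)}) then {THE y. restr R {x} = {(x, y)}}
      else {})"

definition Must :: "'v set \<Rightarrow> 'v \<Rightarrow> ('v \<times> 'v) set \<Rightarrow> ('v \<times> 'v) set" where
  "Must P und R = (\<Union>x\<in>P. {x} \<times> Mset und R x)"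

fun Def_of :: "'v set \<Rightarrow> 'v stmt \<Rightarrow> ('v \<times> 'v) set \<Rightarrow> 'v set" where
  "Def_of P (Use x) A = {}"
| "Def_of P (AddrOf x a) A = {x}"
| "Def_of P (Copy x y) A = {x}"
| "Def_of P (Load x y) A = {x}"
| "Def_of P (Store x y) A = (A `` {x}) \<inter> P"
| "Def_of P Other A = {}"

fun Kill_of :: "'v set \<Rightarrow> 'v \<Rightarrow> 'v stmt \<Rightarrow> ('v \<times> 'v) set \<Rightarrow> 'v set" where
  "Kill_of P und (Use x) A = {}"
| "Kill_of P und (AddrOf x a) A = {x}"
| "Kill_of P und (Copy x y) A = {x}"
| "Kill_of P und (Load x y) A = {x}"
| "Kill_of P und (Store x y) A = (Must P und A `` {x}) \<inter> P"
| "Kill_of P und Other A = {}"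

text \<open>Ref depends on A = Ain_n and Lo = Lout_n.\<close>
fun Ref_of :: "'v set \<Rightarrow> 'v stmt \<Rightarrow> ('v \<times> 'v) set \<Rightarrow> 'v set \<Rightarrow> 'v set" where
  "Ref_of P (Use x) A Lo = {x}"
| "Ref_of P (AddrOf x a) A Lo = {}"
| "Ref_of P (Copy x y) A Lo = (if Def_of P (Copy x y) A \<inter> Lo \<noteq> {} then {y} else {})"
| "Ref_of P (Load x y) A Lo =
     (if Def_of P (Load x y) A \<inter> Lo \<noteq> {} then {y} \<union> ((A `` {y}) \<inter> P) else {})"
| "Ref_of P (Store x y) A Lo = (if Def_of P (Store x y) A \<inter> Lo \<noteq> {} then {x, y} else {x})"
| "Ref_of P Other A Lo = {}"

fun Pointee_of :: "'v stmt \<Rightarrow> ('v \<times> 'v) set \<Rightarrow> 'v set" where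
  "Pointee_of (Use x) A = {}"
| "Pointee_of (AddrOf x a) A = {a}"
| "Pointee_of (Copy x y) A = A `` {y}"
| "Pointee_of (Load x y) A = (A O A) `` {y}"
| "Pointee_of (Store x y) A = A `` {y}"
| "Pointee_of Other A = {}"

type_synonym ('n, 'v) dfval =
  "('n \<Rightarrow> 'v set) \<times> ('n \<Rightarrow> 'v set) \<times> ('n \<Rightarrow> ('v \<times> 'v) set) \<times> ('n \<Rightarrow> ('v \<times> 'v) set)"

definition dfF :: "'v set \<Rightarrow> 'v \<Rightarrow> ('n \<Rightarrow> 'n set) \<Rightarrow> ('n \<Rightarrow> 'v stmt) \<Rightarrow> 'n \<Rightarrow> 'n
    \<Rightarrow> ('n, 'v) dfval \<Rightarrow> ('n, 'v) dfval" where
  "dfF P und succ stm startp endp = (\<lambda>(Lin, Lout, Ain, Aout).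
     (\<lambda>n. (Lout n - Kill_of P und (stm n) (Ain n)) \<union> Ref_of P (stm n) (Ain n) (Lout n),
      \<lambda>n. if n = endp then {} else (\<Union>s\<in>succ n. Lin s),
      \<lambda>n. if n = startp then Lin n \<times> {und}
           else restr (\<Union>m\<in>{m. n \<in> succ m}. Aout m) (Lin n),
      \<lambda>n. restr ((Ain n - (Kill_of P und (stm n) (Ain n) \<times> UNIV))
                  \<union> (Def_of P (stm n) (Ain n) \<times> Pointee_of (stm n) (Ain n))) (Lout n)))"

text \<open>The solution: greatest fixed point w.r.t. the data flow order (which is \<supseteq>), i.e. the
  least fixed point w.r.t. componentwise \<subseteq>; this is what iteration from \<emptyset> computes.\<close>
definition df_solution :: "'v set \<Rightarrow> 'v \<Rightarrow> ('n \<Rightarrow> 'n set) \<Rightarrow> ('n \<Rightarrow> 'v stmt) \<Rightarrow> 'n \<Rightarrow> 'n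
    \<Rightarrow> ('n, 'v) dfval" where
  "df_solution P und succ stm startp endp = lfp (dfF P und succ stm startp endp)"

text \<open>Concrete semantics: a memory maps each variable to its content (an address = a variable,
  or und). Dereferencing an undefined pointer blocks. Non-pointer locations never hold
  addresses (stores into them are ignored, loads from them yield und).\<close>
inductive exec_step :: "'v set \<Rightarrow> 'v \<Rightarrow> 'v stmt \<Rightarrow> ('v \<Rightarrow> 'v) \<Rightarrow> ('v \<Rightarrow> 'v) \<Rightarrow> bool"
  for P :: "'v set" and und :: 'v where
  "exec_step P und (Use x) \<sigma> \<sigma>"
| "exec_step P und Other \<sigma> \<sigma>"
| "exec_step P und (AddrOf x a) \<sigma> (\<sigma>(x := a))"
| "exec_step P und (Copy x y) \<sigma> (\<sigma>(x := \<sigma> y))"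
| "\<sigma> y \<noteq> und \<Longrightarrow>
     exec_step P und (Load x y) \<sigma> (\<sigma>(x := (if \<sigma> y \<in> P then \<sigma> (\<sigma> y) else und)))"
| "\<sigma> x \<noteq> und \<Longrightarrow>
     exec_step P und (Store x y) \<sigma> (if \<sigma> x \<in> P then \<sigma>(\<sigma> x := \<sigma> y) else \<sigma>)"

text \<open>reaches n \<sigma>: some execution path from Start reaches node n with memory \<sigma> on entry.\<close>
inductive reaches :: "'v set \<Rightarrow> 'v \<Rightarrow> ('n \<Rightarrow> 'n set) \<Rightarrow> ('n \<Rightarrow> 'v stmt) \<Rightarrow> 'n
    \<Rightarrow> 'n \<Rightarrow> ('v \<Rightarrow> 'v) \<Rightarrow> bool"
  for P und succ stm startp where
  init: "reaches P und succ stm startp startp (\<lambda>_. und)"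
| step: "reaches P und succ stm startp m \<sigma> \<Longrightarrow> n \<in> succ m \<Longrightarrow>
     exec_step P und (stm m) \<sigma> \<sigma>' \<Longrightarrow> reaches P und succ stm startp n \<sigma>'"

definition cfg_edges :: "('n \<Rightarrow> 'n set) \<Rightarrow> ('n \<times> 'n) set" where
  "cfg_edges succ = {(a, b). b \<in> succ a}"

text \<open>Well-formed procedure: all nodes of type 'n are nodes of the CFG.\<close>
definition is_procedure :: "'v set \<Rightarrow> 'v \<Rightarrow> ('n \<Rightarrow> 'n set) \<Rightarrow> ('n \<Rightarrow> 'v stmt) \<Rightarrow> 'n \<Rightarrow> 'n \<Rightarrow> bool" where
  "is_procedure P und succ stm startp endp \<longleftrightarrow>
     und \<notin> P \<and>
     (\<forall>m. startp \<notin> succ m) \<and> succ endp = {} \<and>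
     (\<forall>m. (startp, m) \<in> (cfg_edges succ)\<^sup>*) \<and> (\<forall>m. (m, endp) \<in> (cfg_edges succ)\<^sup>*) \<and>
     (\<forall>m. wf_stmt P (stm m))"

end

theory Submission
  imports Defs
begin

text \<open>
  Call a memory \<sigma> sound for a set of live variables L and a points-to relation A
  if every variable v in L whose content is defined satisfies (v, \<sigma> v) \<in> A. We show that
  on every execution path the memory on entry to a node n is sound for Lin n and Ain n.

  First, the data flow operator dfF is monotone (Kill is
  antitone in the points-to relation, everything else is monotone), so the solution, its
  least fixed point, satisfies the data flow equations. Second, one transfer step preserves
  soundness: if \<sigma> is sound for Lin m = (Lout m - Kill) \<union> Ref and Ain m, then after executing
  the statement of m every live-out variable holding a defined address is recorded in
  (Ain m - Kill \<times> V) \<union> Def \<times> Pointee. Restricting to Lout m and flowing along the edge to a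
  successor then gives soundness at the successor, and induction over the path gives the
  invariant. The theorem follows since Ref_n \<subseteq> Lin_n.
\<close>

definition sound_mem :: "'v \<Rightarrow> 'v set \<Rightarrow> ('v \<times> 'v) set \<Rightarrow> ('v \<Rightarrow> 'v) \<Rightarrow> bool" where
  "sound_mem und L A \<sigma> \<longleftrightarrow> (\<forall>v\<in>L. \<sigma> v \<noteq> und \<longrightarrow> (v, \<sigma> v) \<in> A)"

lemma Mset_antimono:
  assumes "R \<subseteq> R'"
  shows "Mset und R' x \<subseteq> Mset und R x"
proof -
  have sub: "restr R {x} \<subseteq> restr R' {x}" using assms by (auto simp: restr_def)
  consider (undef) "restr R' {x} = {} \<or> restr R' {x} = {(x, und)}"
    | (single) y where "\<not> (restr R' {x} = {} \<or> restr R' {x} = {(x, und)})"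
        "y \<noteq> und" "restr R' {x} = {(x, y)}"
    | (several) "\<not> (restr R' {x} = {} \<or> restr R' {x} = {(x, und)})"
        "\<not> (\<exists>y. y \<noteq> und \<and> restr R' {x} = {(x, y)})"
    by blast
  then show ?thesis
  proof cases
    case undef
    then have "restr R {x} = {} \<or> restr R {x} = {(x, und)}"
      using sub by (auto dest: subset_singletonD)
    then show ?thesis by (simp add: Mset_def)
  next
    case (single y)
    then have "restr R {x} = {} \<or> restr R {x} = {(x, y)}"
      using sub by (auto dest: subset_singletonD)
    then show ?thesis using single by (auto simp: Mset_def)
  next
    case several
    then have "Mset und R' x = {}" unfolding Mset_def by (simp only: if_False)
    then show ?thesis by simp
  qed
qed

lemma Must_antimono: "A \<subseteq> A' \<Longrightarrow> Must P und A' \<subseteq> Must P und A"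
  unfolding Must_def by (intro UN_mono Sigma_mono order_refl Mset_antimono)

lemma Kill_antimono: "A \<subseteq> A' \<Longrightarrow> Kill_of P und s A' \<subseteq> Kill_of P und s A"
  by (cases s) (use Must_antimono[of A A' P und] in auto)

lemma Def_mono: "A \<subseteq> A' \<Longrightarrow> Def_of P s A \<subseteq> Def_of P s A'"
  by (cases s) auto

lemma Ref_mono: "A \<subseteq> A' \<Longrightarrow> Lo \<subseteq> Lo' \<Longrightarrow> Ref_of P s A Lo \<subseteq> Ref_of P s A' Lo'"
  by (cases s) auto

lemma Pointee_mono: "A \<subseteq> A' \<Longrightarrow> Pointee_of s A \<subseteq> Pointee_of s A'"
  by (cases s) auto

lemma restr_mono: "R \<subseteq> R' \<Longrightarrow> X \<subseteq> X' \<Longrightarrow> restr R X \<subseteq> restr R' X'"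
  by (auto simp: restr_def)

lemma node_transfer_mono:
  assumes A: "A \<subseteq> A'" and Lo: "Lo \<subseteq> Lo'"
  shows "(Lo - Kill_of P und s A) \<union> Ref_of P s A Lo
           \<subseteq> (Lo' - Kill_of P und s A') \<union> Ref_of P s A' Lo'"
    and "restr ((A - Kill_of P und s A \<times> UNIV) \<union> Def_of P s A \<times> Pointee_of s A) Lo
           \<subseteq> restr ((A' - Kill_of P und s A' \<times> UNIV) \<union> Def_of P s A' \<times> Pointee_of s A') Lo'"
proof -
  have K: "Kill_of P und s A' \<subseteq> Kill_of P und s A" by (rule Kill_antimono[OF A])
  show "(Lo - Kill_of P und s A) \<union> Ref_of P s A Lo
          \<subseteq> (Lo' - Kill_of P und s A') \<union> Ref_of P s A' Lo'"
    using K Lo Ref_mono[OF A Lo, of P s] by blast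
  have "Def_of P s A \<times> Pointee_of s A \<subseteq> Def_of P s A' \<times> Pointee_of s A'"
    using Def_mono[OF A] Pointee_mono[OF A] by blast
  then show "restr ((A - Kill_of P und s A \<times> UNIV) \<union> Def_of P s A \<times> Pointee_of s A) Lo
          \<subseteq> restr ((A' - Kill_of P und s A' \<times> UNIV) \<union> Def_of P s A' \<times> Pointee_of s A') Lo'"
    using K A Lo by (intro restr_mono) blast+
qed

lemma dfF_mono:
  fixes succ :: "'n \<Rightarrow> 'n set" and stm :: "'n \<Rightarrow> 'v stmt"
  shows "mono (dfF P und succ stm startp endp)"
proof (rule monoI)
  fix u w :: "('n, 'v) dfval"
  assume "u \<le> w"
  moreover obtain Lin Lout Ain Aout where u: "u = (Lin, Lout, Ain, Aout)" by (cases u) auto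
  moreover obtain Lin' Lout' Ain' Aout' where w: "w = (Lin', Lout', Ain', Aout')" by (cases w) auto
  ultimately have le: "\<And>n. Lin n \<subseteq> Lin' n" "\<And>n. Lout n \<subseteq> Lout' n"
      "\<And>n. Ain n \<subseteq> Ain' n" "\<And>n. Aout n \<subseteq> Aout' n"
    by (auto simp: less_eq_prod_def le_fun_def)
  have transfer:
    "\<And>n. (Lout n - Kill_of P und (stm n) (Ain n)) \<union> Ref_of P (stm n) (Ain n) (Lout n)
       \<subseteq> (Lout' n - Kill_of P und (stm n) (Ain' n)) \<union> Ref_of P (stm n) (Ain' n) (Lout' n)"
    "\<And>n. restr ((Ain n - Kill_of P und (stm n) (Ain n) \<times> UNIV)
            \<union> Def_of P (stm n) (Ain n) \<times> Pointee_of (stm n) (Ain n)) (Lout n)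
       \<subseteq> restr ((Ain' n - Kill_of P und (stm n) (Ain' n) \<times> UNIV)
            \<union> Def_of P (stm n) (Ain' n) \<times> Pointee_of (stm n) (Ain' n)) (Lout' n)"
    by (rule node_transfer_mono[OF le(3) le(2)])+
  have flow: "\<And>n. restr (\<Union>m\<in>{m. n \<in> succ m}. Aout m) (Lin n)
       \<subseteq> restr (\<Union>m\<in>{m. n \<in> succ m}. Aout' m) (Lin' n)"
    using le by (intro restr_mono UN_mono) auto
  show "dfF P und succ stm startp endp u \<le> dfF P und succ stm startp endp w"
    unfolding u w dfF_def using le transfer flow
    by (auto simp: less_eq_prod_def le_fun_def)
qed

lemma df_solution_fixpoint:
  "dfF P und succ stm startp endp (df_solution P und succ stm startp endp)
     = df_solution P und succ stm startp endp"
  unfolding df_solution_def by (rule lfp_fixpoint[OF dfF_mono])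

lemma dfF_fixpoint_equations:
  assumes "dfF P und succ stm startp endp (Lin, Lout, Ain, Aout) = (Lin, Lout, Ain, Aout)"
  shows "Lin n = (Lout n - Kill_of P und (stm n) (Ain n)) \<union> Ref_of P (stm n) (Ain n) (Lout n)"
    and "Lout n = (if n = endp then {} else (\<Union>s\<in>succ n. Lin s))"
    and "Ain n = (if n = startp then Lin n \<times> {und}
                  else restr (\<Union>m\<in>{m. n \<in> succ m}. Aout m) (Lin n))"
    and "Aout n = restr ((Ain n - Kill_of P und (stm n) (Ain n) \<times> UNIV)
                  \<union> Def_of P (stm n) (Ain n) \<times> Pointee_of (stm n) (Ain n)) (Lout n)"
  using assms[symmetric] unfolding dfF_def by simp_all

lemma Kill_store_subset:
  assumes xa: "(x, a) \<in> A" and a: "a \<noteq> und"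
  shows "Kill_of P und (Store x y) A \<subseteq> {a}"
proof -
  have r: "(x, a) \<in> restr A {x}" using xa by (simp add: restr_def)
  then have c: "\<not> (restr A {x} = {} \<or> restr A {x} = {(x, und)})" using a by blast
  have "Mset und A x \<subseteq> {a}"
  proof (cases "\<exists>y. y \<noteq> und \<and> restr A {x} = {(x, y)}")
    case True
    then obtain y where y: "restr A {x} = {(x, y)}" by blast
    then have "a = y" using r by blast
    moreover have "(THE y'. restr A {x} = {(x, y')}) = y"
      using y by (intro the_equality) auto
    ultimately show ?thesis using c True by (simp only: Mset_def if_False if_True)
  next
    case False
    then have "Mset und A x = {}" using c unfolding Mset_def by (simp only: if_False)
    then show ?thesis by simp
  qed
  then show ?thesis by (auto simp: Must_def)
qed

text \<open>Throughout this block, \<sigma> is the memory on entry to a node with statement s, points-to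
  information A and live-out set Lo, and \<sigma> is sound for the resulting live-in set.\<close>
context
  fixes P :: "'v set" and und :: 'v and s :: "'v stmt" and A :: "('v \<times> 'v) set"
    and Lo :: "'v set" and \<sigma> \<sigma>' :: "'v \<Rightarrow> 'v"
  assumes sound: "sound_mem und ((Lo - Kill_of P und s A) \<union> Ref_of P s A Lo) A \<sigma>"
begin

lemma frame_sound:
  assumes "v \<in> Lo" "v \<notin> Kill_of P und s A" "\<sigma>' v = \<sigma> v" "\<sigma>' v \<noteq> und"
  shows "(v, \<sigma>' v) \<in> (A - Kill_of P und s A \<times> UNIV) \<union> Def_of P s A \<times> Pointee_of s A"
  using sound assms by (auto simp: sound_mem_def)

lemma Ref_sound: "y \<in> Ref_of P s A Lo \<Longrightarrow> \<sigma> y \<noteq> und \<Longrightarrow> (y, \<sigma> y) \<in> A"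
  using sound by (auto simp: sound_mem_def)

text \<open>The store case: the only location that may change is \<sigma> x, which is then defined.\<close>
lemma store_sound:
  assumes s: "s = Store x y" and x: "\<sigma> x \<noteq> und"
    and \<sigma>': "\<sigma>' = (if \<sigma> x \<in> P then \<sigma>(\<sigma> x := \<sigma> y) else \<sigma>)"
    and v: "v \<in> Lo" "\<sigma>' v \<noteq> und"
  shows "(v, \<sigma>' v) \<in> (A - Kill_of P und s A \<times> UNIV) \<union> Def_of P s A \<times> Pointee_of s A"
proof (cases "\<sigma> x \<in> P \<and> v = \<sigma> x")
  case True
  have x_pt: "(x, \<sigma> x) \<in> A" using Ref_sound[OF _ x] s by simp
  then have def: "v \<in> Def_of P s A" using True s by auto
  then have "y \<in> Ref_of P s A Lo" using s v(1) by auto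
  then have "(y, \<sigma> y) \<in> A" using Ref_sound v(2) True \<sigma>' by auto
  then show ?thesis using def s True \<sigma>' by auto
next
  case False
  have x_pt: "(x, \<sigma> x) \<in> A" using Ref_sound[OF _ x] s by simp
  have "Kill_of P und s A \<subseteq> {\<sigma> x} \<inter> P"
    using Kill_store_subset[OF x_pt x] s by auto
  then have "v \<notin> Kill_of P und s A" using False by blast
  moreover have "\<sigma>' v = \<sigma> v" using False \<sigma>' by auto
  ultimately show ?thesis using frame_sound v by blast
qed

lemma transfer_sound:
  assumes exec: "exec_step P und s \<sigma> \<sigma>'" and v: "v \<in> Lo" "\<sigma>' v \<noteq> und"
  shows "(v, \<sigma>' v) \<in> (A - Kill_of P und s A \<times> UNIV) \<union> Def_of P s A \<times> Pointee_of s A"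
  using exec
proof cases
  case (3 x a)
  then show ?thesis using frame_sound[of v] v by (cases "v = x") auto
next
  case (4 x y)
  show ?thesis
  proof (cases "v = x")
    case True
    then have "y \<in> Ref_of P s A Lo" using 4 v(1) by auto
    then show ?thesis using Ref_sound v(2) 4 True by auto
  qed (use frame_sound[of v] v 4 in auto)
next
  case (5 y x)
  show ?thesis
  proof (cases "v = x")
    case True
    then have ref: "Ref_of P s A Lo = {y} \<union> (A `` {y} \<inter> P)" using 5 v(1) by auto
    have y_pt: "(y, \<sigma> y) \<in> A" using Ref_sound ref 5 by auto
    have "\<sigma> y \<in> P" and val: "\<sigma>' v = \<sigma> (\<sigma> y)"
      using v(2) 5 True by (auto split: if_splits)
    then have "(\<sigma> y, \<sigma> (\<sigma> y)) \<in> A" using Ref_sound ref y_pt v(2) by auto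
    then show ?thesis using y_pt val 5 True by auto
  qed (use frame_sound[of v] v 5 in auto)
next
  case (6 x y)
  then show ?thesis using store_sound v by blast
qed (use frame_sound[of v] v in auto)

end

lemma reaches_sound:
  assumes reach: "reaches P und succ stm startp n \<sigma>"
    and proc: "is_procedure P und succ stm startp endp"
    and solves: "dfF P und succ stm startp endp (Lin, Lout, Ain, Aout) = (Lin, Lout, Ain, Aout)"
  shows "sound_mem und (Lin n) (Ain n) \<sigma>"
  using reach
proof induction
  case init
  then show ?case by (simp add: sound_mem_def)
next
  case (step m \<sigma> n \<sigma>')
  have Lin: "Lin m = (Lout m - Kill_of P und (stm m) (Ain m)) \<union> Ref_of P (stm m) (Ain m) (Lout m)"
    and Lout: "Lout m = (\<Union>s\<in>succ m. Lin s)"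
    and Ain: "Ain n = restr (\<Union>k\<in>{k. n \<in> succ k}. Aout k) (Lin n)"
    and Aout: "Aout m = restr ((Ain m - Kill_of P und (stm m) (Ain m) \<times> UNIV)
                  \<union> Def_of P (stm m) (Ain m) \<times> Pointee_of (stm m) (Ain m)) (Lout m)"
    using dfF_fixpoint_equations[OF solves] proc step.hyps(2)
    by (auto simp: is_procedure_def)
  show ?case unfolding sound_mem_def
  proof (intro ballI impI)
    fix v assume vL: "v \<in> Lin n" and vu: "\<sigma>' v \<noteq> und"
    have "v \<in> Lout m" using Lout vL step.hyps(2) by auto
    then have "(v, \<sigma>' v) \<in> Aout m"
      using transfer_sound[OF step.IH[unfolded Lin] step.hyps(3)] vu Aout
      by (auto simp: restr_def)
    then show "(v, \<sigma>' v) \<in> Ain n" using Ain vL step.hyps(2) by (auto simp: restr_def)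
  qed
qed

theorem theorem3:
  fixes P :: "'v::finite set" and und :: 'v
    and succ :: "'n::finite \<Rightarrow> 'n set" and stm :: "'n \<Rightarrow> 'v stmt"
    and startp endp n :: 'n and x z :: 'v and \<sigma> :: "'v \<Rightarrow> 'v"
  assumes "is_procedure P und succ stm startp endp"
    and "(Lin, Lout, Ain, Aout) = df_solution P und succ stm startp endp"
    and "x \<in> P" and "z \<noteq> und"
    and "reaches P und succ stm startp n \<sigma>" and "\<sigma> x = z"
    and "x \<in> Ref_of P (stm n) (Ain n) (Lout n)"
  shows "(x, z) \<in> Ain n"
proof -
  have solves: "dfF P und succ stm startp endp (Lin, Lout, Ain, Aout) = (Lin, Lout, Ain, Aout)"
    using df_solution_fixpoint by (simp only: assms(2))
  then have "x \<in> Lin n" using assms(7) by (subst dfF_fixpoint_equations(1)) auto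
  moreover have "sound_mem und (Lin n) (Ain n) \<sigma>"
    using reaches_sound[OF assms(5) assms(1) solves] .
  ultimately show ?thesis using assms(4,6) by (auto simp: sound_mem_def)
qed

end
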